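(* Let $(X,\leq)$ be a poset and $K$ a field, write $FI=FI(X,K)$ and $J=J(FI(X,K))$ (the Jacobson radical). For $k>0$ let $Z_k=\{\alpha\in FI\mid \alpha_{xy}=0 \text{ whenever } l(x,y)\leq k-1\}$. Then: (1) $FI^{(1)}\subseteq Z_1=J$; (2) $Z_mZ_n\subseteq Z_{m+n}$ for all $m,n>0$; (3) $\gamma_n(J)\subseteq Z_n$ for all $n>0$; (4) $FI^{(n)}\subseteq Z_{2^{n-1}}$ for all $n>0$; (5) $J^{(n)}\subseteq Z_{2^n}$ for all $n\geq0$.
   Context: $FI(X,K)$ is the finitary incidence algebra: the $K$-vector space of formal sums $\alpha=\sum_{x\leq y}\alpha_{xy}e_{xy}$ ($x,y\in X$, $\alpha_{xy}\in K$) such that for every pair $x<y$ only finitely many $x\leq u<v\leq y$ have $\alpha_{uv}\neq0$, with convolution product $\alpha\beta=\sum_{x\leq y}\big(\sum_{x\leq z\leq y}\alpha_{xz}\beta_{zy}\big)e_{xy}$. For $x\leq y$, $l(x,y)$ is the length of the interval $\{z\mid x\leq z\leq y\}$, i.e. the supremum of $|C|-1$ over finite chains $C$ in it. With $[a,b]=ab-ba$ and $UV$, $[U,V]$ the spans of products, commutators: $FI^{(0)}=FI$, $FI^{(n+1)}=[FI^{(n)},FI^{(n)}]FI$; $J^{(0)}=J$, $J^{(n+1)}=[J^{(n)},J^{(n)}]J$; $\gamma_1(J)=J$, $\gamma_{n+1}(J)=[\gamma_n(J),J]$. *)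

theory Defs
  imports Main "HOL-Library.Extended_Nat"
begin

text \<open>Elements of FI(X,K) are represented as functions alpha :: X => X => K,
  with alpha x y the coefficient of e_xy; coefficients at pairs with not (x <= y) are 0.
  The poset X is a type of class order, K a type of class field.\<close>

definition FI :: "('a::order \<Rightarrow> 'a \<Rightarrow> 'k::field) set" where
  "FI = {\<alpha>. (\<forall>x y. \<not> x \<le> y \<longrightarrow> \<alpha> x y = 0) \<and>
             (\<forall>x y. x < y \<longrightarrow> finite {(u, v). x \<le> u \<and> u < v \<and> v \<le> y \<and> \<alpha> u v \<noteq> 0})}"

text \<open>Convolution product; the sum ranges over the (finitely many, for elements of FI)
  z in [x,y] contributing a nonzero term.\<close>
definition conv :: "('a::order \<Rightarrow> 'a \<Rightarrow> 'k::field) \<Rightarrow> ('a \<Rightarrow> 'a \<Rightarrow> 'k) \<Rightarrow> ('a \<Rightarrow> 'a \<Rightarrow> 'k)" where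
  "conv \<alpha> \<beta> = (\<lambda>x y. if x \<le> y then
      (\<Sum>z \<in> {z. x \<le> z \<and> z \<le> y \<and> \<alpha> x z * \<beta> z y \<noteq> 0}. \<alpha> x z * \<beta> z y) else 0)"

definition comm :: "('a::order \<Rightarrow> 'a \<Rightarrow> 'k::field) \<Rightarrow> ('a \<Rightarrow> 'a \<Rightarrow> 'k) \<Rightarrow> ('a \<Rightarrow> 'a \<Rightarrow> 'k)" where
  "comm \<alpha> \<beta> = (\<lambda>x y. conv \<alpha> \<beta> x y - conv \<beta> \<alpha> x y)"

definition kspan :: "('a \<Rightarrow> 'a \<Rightarrow> 'k::field) set \<Rightarrow> ('a \<Rightarrow> 'a \<Rightarrow> 'k) set" where
  "kspan S = {f. \<exists>n (c :: nat \<Rightarrow> 'k) v. (\<forall>i<n. v i \<in> S) \<and>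
                   f = (\<lambda>x y. \<Sum>i<n. c i * v i x y)}"

definition prodsp :: "('a::order \<Rightarrow> 'a \<Rightarrow> 'k::field) set \<Rightarrow> ('a \<Rightarrow> 'a \<Rightarrow> 'k) set \<Rightarrow> ('a \<Rightarrow> 'a \<Rightarrow> 'k) set" where
  "prodsp U V = kspan {conv u v | u v. u \<in> U \<and> v \<in> V}"

definition comsp :: "('a::order \<Rightarrow> 'a \<Rightarrow> 'k::field) set \<Rightarrow> ('a \<Rightarrow> 'a \<Rightarrow> 'k) set \<Rightarrow> ('a \<Rightarrow> 'a \<Rightarrow> 'k) set" where
  "comsp U V = kspan {comm u v | u v. u \<in> U \<and> v \<in> V}"

definition left_ideal :: "('a::order \<Rightarrow> 'a \<Rightarrow> 'k::field) set \<Rightarrow> bool" where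
  "left_ideal L \<longleftrightarrow> L \<subseteq> FI \<and> (\<lambda>x y. 0) \<in> L \<and> (\<forall>a\<in>L. \<forall>b\<in>L. (\<lambda>x y. a x y + b x y) \<in> L) \<and> (\<forall>a\<in>L. (\<lambda>x y. - a x y) \<in> L)
     \<and> (\<forall>r\<in>FI. \<forall>a\<in>L. conv r a \<in> L)"

definition maximal_left_ideal :: "('a::order \<Rightarrow> 'a \<Rightarrow> 'k::field) set \<Rightarrow> bool" where
  "maximal_left_ideal L \<longleftrightarrow> left_ideal L \<and> L \<noteq> FI \<and>
     (\<forall>L'. left_ideal L' \<and> L \<subseteq> L' \<longrightarrow> L' = L \<or> L' = FI)"

definition Jac :: "('a::order \<Rightarrow> 'a \<Rightarrow> 'k::field) set" where
  "Jac = FI \<inter> \<Inter> {L. maximal_left_ideal L}"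

definition len :: "'a::order \<Rightarrow> 'a \<Rightarrow> enat" where
  "len x y = Sup {enat (card C - 1) | C. finite C \<and> C \<noteq> {} \<and> C \<subseteq> {z. x \<le> z \<and> z \<le> y}
                                        \<and> Complete_Partial_Order.chain (\<le>) C}"

definition Zk :: "nat \<Rightarrow> ('a::order \<Rightarrow> 'a \<Rightarrow> 'k::field) set" where
  "Zk k = {\<alpha> \<in> FI. \<forall>x y. x \<le> y \<and> len x y \<le> enat (k - 1) \<longrightarrow> \<alpha> x y = 0}"

primrec FIder :: "nat \<Rightarrow> ('a::order \<Rightarrow> 'a \<Rightarrow> 'k::field) set" where
  "FIder 0 = FI"
| "FIder (Suc n) = prodsp (comsp (FIder n) (FIder n)) FI"

primrec Jder :: "nat \<Rightarrow> ('a::order \<Rightarrow> 'a \<Rightarrow> 'k::field) set" where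
  "Jder 0 = Jac"
| "Jder (Suc n) = prodsp (comsp (Jder n) (Jder n)) Jac"

text \<open>Lower central series, shifted: lcs n = gamma_(n+1)(J).\<close>
primrec lcs :: "nat \<Rightarrow> ('a::order \<Rightarrow> 'a \<Rightarrow> 'k::field) set" where
  "lcs 0 = Jac"
| "lcs (Suc n) = comsp (lcs n) Jac"

end

theory Submission
  imports Defs
begin

(* An element lies in Z_k iff each nonzero entry alpha_xy sits on an interval [x,y] containing a chain
   of more than k elements. Every nonzero term of (alpha beta)_xy passes through some z in [x,y], and
   chains in [x,z] and [z,y] glue to a chain in [x,y]; hence Z_m Z_n is contained in Z_(m+n). As Z_k is a
   subspace and a right ideal of FI, and commutators of FI have zero diagonal, (1) and (3)-(5) follow by
   induction once Z_1 = J is known. The elements of FI vanishing at a fixed diagonal entry form a maximal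
   left ideal, so J lies in Z_1. Conversely, for beta in Z_1 the geometric series sum_n beta^n is locally
   finite, hence a left inverse of delta - beta in FI; with the usual argument this puts beta into every
   maximal left ideal. *)

section \<open>The algebra FI(X,K)\<close>

type_synonym ('a, 'k) incidence = "'a \<Rightarrow> 'a \<Rightarrow> 'k"

definition triangular :: "('a::order, 'k::zero) incidence \<Rightarrow> bool" where
  "triangular a \<longleftrightarrow> (\<forall>x y. a x y \<noteq> 0 \<longrightarrow> x \<le> y)"

definition offdiag_support :: "('a::order, 'k::zero) incidence \<Rightarrow> 'a \<Rightarrow> 'a \<Rightarrow> ('a \<times> 'a) set" where
  "offdiag_support a x y = {(u, v). x \<le> u \<and> u < v \<and> v \<le> y \<and> a u v \<noteq> 0}"

lemma triangularD: "triangular a \<Longrightarrow> a x y \<noteq> 0 \<Longrightarrow> x \<le> y"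
  unfolding triangular_def by blast

lemma FI_iff: "a \<in> FI \<longleftrightarrow> triangular a \<and> (\<forall>x y. finite (offdiag_support a x y))"
proof -
  have "offdiag_support a x y = {}" if "\<not> x < y" for x y
    using that unfolding offdiag_support_def by (auto dest: order_le_less_trans order_less_le_trans)
  then have "(\<forall>x y. x < y \<longrightarrow> finite (offdiag_support a x y))
      \<longleftrightarrow> (\<forall>x y. finite (offdiag_support a x y))"
    by (metis finite.emptyI)
  then show ?thesis
    unfolding FI_def triangular_def by (auto simp: offdiag_support_def)
qed

lemma FI_D:
  assumes "a \<in> FI"
  shows FI_triangular: "triangular a" and FI_finite_support: "finite (offdiag_support a x y)"
  using assms by (simp_all add: FI_iff)

lemma offdiag_support_mono:
  "x \<le> x' \<Longrightarrow> y' \<le> y \<Longrightarrow> offdiag_support a x' y' \<subseteq> offdiag_support a x y"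
  unfolding offdiag_support_def by (auto intro: order_trans)

lemma conv_triangular: "triangular (conv a b)"
  by (simp add: triangular_def conv_def)

lemma conv_neq_zeroE:
  assumes "conv a b x y \<noteq> 0"
  obtains z where "x \<le> z" "z \<le> y" "a x z \<noteq> 0" "b z y \<noteq> 0"
proof -
  have "{z. x \<le> z \<and> z \<le> y \<and> a x z * b z y \<noteq> 0} \<noteq> {}"
    using assms unfolding conv_def by (metis sum.empty)
  then show thesis using that by auto
qed

lemma conv_eq_sum:
  assumes "triangular a" "triangular b" "finite F" "{z. a x z * b z y \<noteq> 0} \<subseteq> F"
  shows "conv a b x y = (\<Sum>z\<in>F. a x z * b z y)"
proof (cases "x \<le> y")
  case True
  then have "{z. x \<le> z \<and> z \<le> y \<and> a x z * b z y \<noteq> 0} = {z. a x z * b z y \<noteq> 0}"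
    using assms(1,2) by (auto dest: triangularD)
  then show ?thesis
    unfolding conv_def using True assms(3,4) by (auto intro: sum.mono_neutral_left)
next
  case False
  have "a x z * b z y = 0" for z
    using False triangularD[OF assms(1)] triangularD[OF assms(2)] by (metis mult_eq_0_iff order_trans)
  then show ?thesis using False by (simp add: conv_def del: mult_eq_0_iff)
qed

lemma conv_diag:
  assumes "triangular a" "triangular b"
  shows "conv a b x x = a x x * b x x"
proof -
  have "{z. a x z * b z x \<noteq> 0} \<subseteq> {x}"
    using assms by (auto dest: triangularD intro: order.antisym)
  then show ?thesis
    using conv_eq_sum[OF assms, of "{x}"] by simp
qed

definition row_support :: "('a::order, 'k::zero) incidence \<Rightarrow> 'a \<Rightarrow> 'a \<Rightarrow> 'a set" where
  "row_support a x y = {z. x \<le> z \<and> z \<le> y \<and> a x z \<noteq> 0}"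

definition col_support :: "('a::order, 'k::zero) incidence \<Rightarrow> 'a \<Rightarrow> 'a \<Rightarrow> 'a set" where
  "col_support a x y = {z. x \<le> z \<and> z \<le> y \<and> a z y \<noteq> 0}"

lemma finite_row_support:
  assumes "a \<in> FI"
  shows "finite (row_support a x y)"
proof (rule finite_subset)
  show "row_support a x y \<subseteq> insert x (snd ` offdiag_support a x y)"
    unfolding row_support_def offdiag_support_def by (force simp: order.order_iff_strict)
qed (simp add: FI_finite_support[OF assms])

lemma finite_col_support:
  assumes "a \<in> FI"
  shows "finite (col_support a x y)"
proof (rule finite_subset)
  show "col_support a x y \<subseteq> insert y (fst ` offdiag_support a x y)"
    unfolding col_support_def offdiag_support_def by (force simp: order.order_iff_strict)
qed (simp add: FI_finite_support[OF assms])

lemma conv_eq_sum_row: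
  "a \<in> FI \<Longrightarrow> triangular b \<Longrightarrow> conv a b x y = (\<Sum>z\<in>row_support a x y. a x z * b z y)"
  by (rule conv_eq_sum[OF FI_triangular _ finite_row_support])
    (auto simp: row_support_def dest: FI_triangular triangularD)

lemma conv_eq_sum_col:
  "triangular a \<Longrightarrow> b \<in> FI \<Longrightarrow> conv a b x y = (\<Sum>z\<in>col_support b x y. a x z * b z y)"
  by (rule conv_eq_sum[OF _ FI_triangular finite_col_support])
    (auto simp: col_support_def dest: FI_triangular triangularD)

definition delta :: "('a, 'k::zero_neq_one) incidence" where
  "delta x y = (if x = y then 1 else 0)"

lemma FI_delta: "delta \<in> FI"
  by (simp add: FI_iff triangular_def offdiag_support_def delta_def)

lemma conv_scaled_delta: "triangular a \<Longrightarrow> conv (\<lambda>x y. c * delta x y) a = (\<lambda>x y. c * a x y)"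
proof (intro ext)
  fix x y
  assume "triangular a"
  then have "conv (\<lambda>x y. c * delta x y) a x y = (\<Sum>z\<in>{x}. c * delta x z * a z y)"
    by (intro conv_eq_sum) (auto simp: triangular_def delta_def)
  then show "conv (\<lambda>x y. c * delta x y) a x y = c * a x y"
    by (simp add: delta_def)
qed

lemma conv_delta_left: "triangular a \<Longrightarrow> conv delta a = a"
  using conv_scaled_delta[of a 1] by simp

lemma conv_delta_right: "triangular a \<Longrightarrow> conv a delta = a"
proof (intro ext)
  fix x y
  assume "triangular a"
  then have "conv a delta x y = (\<Sum>z\<in>{y}. a x z * delta z y)"
    by (intro conv_eq_sum) (auto simp: triangular_def delta_def)
  then show "conv a delta x y = a x y"
    by (simp add: delta_def)
qed

lemma FI_zero: "(\<lambda>x y. 0) \<in> FI"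
  by (simp add: FI_iff triangular_def offdiag_support_def)

lemma FI_add:
  assumes "a \<in> FI" "b \<in> FI"
  shows "(\<lambda>x y. a x y + b x y) \<in> FI"
proof -
  have sub: "offdiag_support (\<lambda>x y. a x y + b x y) x y
      \<subseteq> offdiag_support a x y \<union> offdiag_support b x y" for x y
    by (auto simp: offdiag_support_def)
  have "triangular (\<lambda>x y. a x y + b x y)"
    using assms unfolding FI_iff triangular_def by (metis add.left_neutral add.right_neutral)
  with assms show ?thesis
    by (auto simp: FI_iff intro: finite_subset[OF sub])
qed

lemma FI_scale: "a \<in> FI \<Longrightarrow> (\<lambda>x y. c * a x y) \<in> FI"
  by (auto simp: FI_iff triangular_def offdiag_support_def elim!: allE finite_subset[rotated])

lemma FI_uminus: "a \<in> FI \<Longrightarrow> (\<lambda>x y. - a x y) \<in> FI"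
  using FI_scale[of a "- 1"] by simp

lemma FI_diff: "a \<in> FI \<Longrightarrow> b \<in> FI \<Longrightarrow> (\<lambda>x y. a x y - b x y) \<in> FI"
  using FI_add[OF _ FI_uminus, of a b] by simp

lemma FI_conv:
  assumes "a \<in> FI" "b \<in> FI"
  shows "conv a b \<in> FI"
proof -
  have sub: "offdiag_support (conv a b) x y \<subseteq> offdiag_support a x y \<union> offdiag_support b x y
      \<union> fst ` offdiag_support a x y \<times> snd ` offdiag_support b x y" (is "_ \<subseteq> ?S x y") for x y
  proof
    fix p assume "p \<in> offdiag_support (conv a b) x y"
    then obtain u v where p: "p = (u, v)" "x \<le> u" "u < v" "v \<le> y" "conv a b u v \<noteq> 0"
      by (auto simp: offdiag_support_def)
    then obtain z where z: "u \<le> z" "z \<le> v" "a u z \<noteq> 0" "b z v \<noteq> 0"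
      by (auto elim: conv_neq_zeroE)
    consider "z = u" | "z = v" | "u < z" "z < v"
      using z by (auto simp: order.order_iff_strict)
    then show "p \<in> ?S x y"
    proof cases
      case 3
      then have "(u, z) \<in> offdiag_support a x y" "(z, v) \<in> offdiag_support b x y"
        using p z by (auto simp: offdiag_support_def intro: order_trans)
      then show ?thesis
        using p(1) by (metis UnI2 fst_conv mem_Times_iff rev_image_eqI snd_conv)
    qed (use p z in \<open>auto simp: offdiag_support_def\<close>)
  qed
  moreover have "finite (?S x y)" for x y
    using assms by (simp add: FI_finite_support)
  ultimately show ?thesis
    by (simp add: FI_iff conv_triangular finite_subset[OF sub])
qed

lemma conv_zero_left: "conv (\<lambda>x y. 0) b = (\<lambda>x y. 0)"
  unfolding conv_def by (intro ext) simp

lemma conv_add_left: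
  assumes "triangular a" "triangular b" "c \<in> FI"
  shows "conv (\<lambda>x y. a x y + b x y) c = (\<lambda>x y. conv a c x y + conv b c x y)"
proof -
  have "triangular (\<lambda>x y. a x y + b x y)"
    using assms unfolding triangular_def by (metis add.left_neutral add.right_neutral)
  then show ?thesis
    using assms by (intro ext) (simp add: conv_eq_sum_col distrib_right sum.distrib)
qed

lemma conv_uminus_left:
  assumes "triangular a" "c \<in> FI"
  shows "conv (\<lambda>x y. - a x y) c = (\<lambda>x y. - conv a c x y)"
proof -
  have "triangular (\<lambda>x y. - a x y)"
    using assms by (simp add: triangular_def)
  then show ?thesis
    using assms by (intro ext) (simp add: conv_eq_sum_col sum_negf)
qed

lemma conv_add_right:
  assumes "a \<in> FI" "triangular b" "triangular c"
  shows "conv a (\<lambda>x y. b x y + c x y) = (\<lambda>x y. conv a b x y + conv a c x y)"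
proof -
  have "triangular (\<lambda>x y. b x y + c x y)"
    using assms unfolding triangular_def by (metis add.left_neutral add.right_neutral)
  then show ?thesis
    using assms by (intro ext) (simp add: conv_eq_sum_row distrib_left sum.distrib)
qed

lemma conv_diff_right:
  assumes "a \<in> FI" "triangular b" "triangular c"
  shows "conv a (\<lambda>x y. b x y - c x y) = (\<lambda>x y. conv a b x y - conv a c x y)"
proof -
  have "triangular (\<lambda>x y. b x y - c x y)"
    using assms unfolding triangular_def by (metis diff_self diff_zero)
  then show ?thesis
    using assms by (intro ext) (simp add: conv_eq_sum_row right_diff_distrib sum_subtractf)
qed

lemma conv_assoc:
  assumes a: "a \<in> FI" and b: "b \<in> FI" and c: "c \<in> FI"
  shows "conv (conv a b) c = conv a (conv b c)"
proof (intro ext)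
  fix x y
  let ?R = "row_support a x y" and ?C = "col_support c x y"
  have ab: "conv a b x w = (\<Sum>z\<in>?R. a x z * b z w)" if "w \<in> ?C" for w
    using that a b
    by (intro conv_eq_sum finite_row_support FI_triangular)
      (auto simp: row_support_def col_support_def dest: FI_triangular triangularD intro: order_trans)
  have bc: "conv b c z y = (\<Sum>w\<in>?C. b z w * c w y)" if "z \<in> ?R" for z
    using that b c
    by (intro conv_eq_sum finite_col_support FI_triangular)
      (auto simp: row_support_def col_support_def dest: FI_triangular triangularD intro: order_trans)
  have "conv (conv a b) c x y = (\<Sum>w\<in>?C. conv a b x w * c w y)"
    using c by (rule conv_eq_sum_col[OF conv_triangular])
  also have "\<dots> = (\<Sum>w\<in>?C. \<Sum>z\<in>?R. a x z * b z w * c w y)"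
    by (simp add: ab sum_distrib_right)
  also have "\<dots> = (\<Sum>z\<in>?R. \<Sum>w\<in>?C. a x z * (b z w * c w y))"
    by (subst sum.swap) (simp add: mult.assoc)
  also have "\<dots> = (\<Sum>z\<in>?R. a x z * conv b c z y)"
    by (simp add: bc sum_distrib_left)
  also have "\<dots> = conv a (conv b c) x y"
    using a by (rule conv_eq_sum_row[OF _ conv_triangular, symmetric])
  finally show "conv (conv a b) c x y = conv a (conv b c) x y" .
qed

section \<open>Chains and the filtration by the Z_k\<close>

definition chain_longer :: "'a::order \<Rightarrow> 'a \<Rightarrow> nat \<Rightarrow> bool" where
  "chain_longer x y k \<longleftrightarrow>
     (\<exists>C. finite C \<and> C \<subseteq> {x..y} \<and> Complete_Partial_Order.chain (\<le>) C \<and> k < card C)"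

lemma not_len_le_iff_chain_longer:
  assumes "0 < k"
  shows "\<not> len x y \<le> enat (k - 1) \<longleftrightarrow> chain_longer x y k"
proof -
  have interval: "{z. x \<le> z \<and> z \<le> y} = {x..y}"
    by auto
  have card: "\<not> enat (card C - 1) \<le> enat (k - 1) \<longleftrightarrow> k < card C" for C :: "'a set"
    using assms by auto
  have "\<not> len x y \<le> enat (k - 1) \<longleftrightarrow>
      (\<exists>C. finite C \<and> C \<noteq> {} \<and> C \<subseteq> {x..y} \<and> Complete_Partial_Order.chain (\<le>) C \<and> k < card C)"
    unfolding len_def Sup_le_iff interval card[symmetric] by blast
  also have "\<dots> \<longleftrightarrow> chain_longer x y k"
    unfolding chain_longer_def by (metis card.empty not_less0)
  finally show ?thesis .
qed

lemma chain_longer_le: "chain_longer x y k \<Longrightarrow> x \<le> y"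
  unfolding chain_longer_def
  by (metis all_not_in_conv atLeastAtMost_iff card.empty not_less0 order_trans subsetD)

lemma chain_longer_mono:
  "chain_longer x' y' k \<Longrightarrow> x \<le> x' \<Longrightarrow> y' \<le> y \<Longrightarrow> chain_longer x y k"
  unfolding chain_longer_def by (meson atLeastatMost_subset_iff order_trans)

lemma chain_longer_one_iff: "chain_longer x y 1 \<longleftrightarrow> x < y"
proof
  assume "chain_longer x y 1"
  then have "x \<le> y"
    by (rule chain_longer_le)
  obtain C where C: "finite C" "C \<subseteq> {x..y}" "1 < card C"
    using \<open>chain_longer x y 1\<close> unfolding chain_longer_def by blast
  have "x \<noteq> y"
  proof
    assume "x = y"
    then have "card C \<le> card {x}" using C by (intro card_mono) auto
    with C(3) show False by simp
  qed
  with \<open>x \<le> y\<close> show "x < y" by simp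
next
  assume "x < y"
  then show "chain_longer x y 1"
    unfolding chain_longer_def
    by (intro exI[of _ "{x, y}"]) (auto simp: chain_def)
qed

lemma chain_longer_add:
  assumes "chain_longer x z m" "chain_longer z y n"
  shows "chain_longer x y (m + n)"
proof -
  obtain C where C: "finite C" "C \<subseteq> {x..z}" "Complete_Partial_Order.chain (\<le>) C" "m < card C"
    using assms(1) unfolding chain_longer_def by blast
  obtain D where D: "finite D" "D \<subseteq> {z..y}" "Complete_Partial_Order.chain (\<le>) D" "n < card D"
    using assms(2) unfolding chain_longer_def by blast
  have "x \<le> z" "z \<le> y"
    using assms chain_longer_le by blast+
  then have "C \<union> D \<subseteq> {x..y}"
    using C(2) D(2) unfolding subset_iff atLeastAtMost_iff Un_iff by (meson order_trans)
  moreover have "Complete_Partial_Order.chain (\<le>) (C \<union> D)"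
  proof -
    have "c \<le> d" if "c \<in> C" "d \<in> D" for c d
      using that C(2) D(2) by (meson atLeastAtMost_iff order_trans subsetD)
    then show ?thesis
      using C(3) D(3) by (intro chainI) (auto dest: chainD)
  qed
  moreover have "card (C \<inter> D) \<le> 1"
  proof -
    have "C \<inter> D \<subseteq> {z}"
    proof
      fix c assume "c \<in> C \<inter> D"
      then have "c \<le> z" "z \<le> c"
        using C(2) D(2) by auto
      then show "c \<in> {z}" by simp
    qed
    then have "card (C \<inter> D) \<le> card {z}"
      by (intro card_mono) auto
    then show ?thesis by simp
  qed
  then have "m + n < card (C \<union> D)"
    using card_Un_Int[OF C(1) D(1)] C(4) D(4) by linarith
  ultimately show ?thesis
    unfolding chain_longer_def using C(1) D(1) by blast
qed

lemma Zk_iff: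
  assumes "0 < k"
  shows "\<alpha> \<in> Zk k \<longleftrightarrow> \<alpha> \<in> FI \<and> (\<forall>x y. \<alpha> x y \<noteq> 0 \<longrightarrow> chain_longer x y k)"
  using assms unfolding Zk_def
  by (auto simp: not_len_le_iff_chain_longer[symmetric] dest: FI_triangular triangularD)

lemma Zk_one_iff: "\<alpha> \<in> Zk 1 \<longleftrightarrow> \<alpha> \<in> FI \<and> (\<forall>x. \<alpha> x x = 0)"
proof -
  have "(\<forall>x y. \<alpha> x y \<noteq> 0 \<longrightarrow> x < y) \<longleftrightarrow> (\<forall>x. \<alpha> x x = 0)" if "\<alpha> \<in> FI"
  proof
    assume "\<forall>x. \<alpha> x x = 0"
    then show "\<forall>x y. \<alpha> x y \<noteq> 0 \<longrightarrow> x < y"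
      using triangularD[OF FI_triangular[OF that]] by (metis less_le)
  qed blast
  moreover have "\<alpha> \<in> Zk 1 \<longleftrightarrow> \<alpha> \<in> FI \<and> (\<forall>x y. \<alpha> x y \<noteq> 0 \<longrightarrow> x < y)"
    unfolding chain_longer_one_iff[symmetric] by (rule Zk_iff) simp
  ultimately show ?thesis
    by blast
qed

lemma Zk_zero: "0 < k \<Longrightarrow> (\<lambda>x y. 0) \<in> Zk k"
  by (simp add: Zk_iff FI_zero)

lemma Zk_add:
  assumes "0 < k" "a \<in> Zk k" "b \<in> Zk k"
  shows "(\<lambda>x y. a x y + b x y) \<in> Zk k"
proof -
  have "chain_longer x y k" if "a x y + b x y \<noteq> 0" for x y
    using that assms by (cases "a x y = 0") (auto simp: Zk_iff)
  then show ?thesis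
    using assms by (auto simp: Zk_iff FI_add)
qed

lemma Zk_scale: "0 < k \<Longrightarrow> a \<in> Zk k \<Longrightarrow> (\<lambda>x y. c * a x y) \<in> Zk k"
  by (simp add: Zk_iff FI_scale)

lemma Zk_diff:
  assumes "0 < k" "a \<in> Zk k" "b \<in> Zk k"
  shows "(\<lambda>x y. a x y - b x y) \<in> Zk k"
  using Zk_add[OF assms(1,2) Zk_scale[OF assms(1,3), of "- 1"]] by simp

lemma conv_mem_Zk:
  assumes "0 < m" "0 < n" "u \<in> Zk m" "v \<in> Zk n"
  shows "conv u v \<in> Zk (m + n)"
proof -
  have "chain_longer x y (m + n)" if "conv u v x y \<noteq> 0" for x y
  proof -
    obtain z where "u x z \<noteq> 0" "v z y \<noteq> 0"
      using \<open>conv u v x y \<noteq> 0\<close> by (rule conv_neq_zeroE)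
    then show ?thesis
      using assms by (intro chain_longer_add[of x z m y n]) (auto simp: Zk_iff)
  qed
  then show ?thesis
    using assms by (auto simp: Zk_iff FI_conv)
qed

lemma conv_mem_Zk_FI:
  assumes "0 < m" "u \<in> Zk m" "v \<in> FI"
  shows "conv u v \<in> Zk m"
proof -
  have "chain_longer x y m" if "conv u v x y \<noteq> 0" for x y
  proof -
    obtain z where "z \<le> y" "u x z \<noteq> 0"
      using \<open>conv u v x y \<noteq> 0\<close> by (rule conv_neq_zeroE)
    then show ?thesis
      using assms by (intro chain_longer_mono[of x z m x y]) (auto simp: Zk_iff)
  qed
  then show ?thesis
    using assms by (auto simp: Zk_iff FI_conv)
qed

lemma comm_mem_Zk:
  assumes "0 < m" "0 < n" "u \<in> Zk m" "v \<in> Zk n"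
  shows "comm u v \<in> Zk (m + n)"
proof -
  have "conv u v \<in> Zk (m + n)" "conv v u \<in> Zk (m + n)"
    using conv_mem_Zk[OF assms] conv_mem_Zk[OF assms(2,1,4,3)] by (simp_all add: add.commute)
  then show ?thesis
    unfolding comm_def using assms by (simp add: Zk_diff)
qed

lemma comm_mem_Zk_one:
  assumes "u \<in> FI" "v \<in> FI"
  shows "comm u v \<in> Zk 1"
  using assms unfolding Zk_one_iff comm_def
  by (simp add: FI_diff FI_conv conv_diag FI_triangular mult.commute)

lemma kspan_mono: "S \<subseteq> T \<Longrightarrow> kspan S \<subseteq> kspan T"
  unfolding kspan_def by blast

lemma kspan_subset:
  fixes S V :: "('a, 'k::field) incidence set"
  assumes "S \<subseteq> V" "(\<lambda>x y. 0) \<in> V"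
    and "\<And>a b. a \<in> V \<Longrightarrow> b \<in> V \<Longrightarrow> (\<lambda>x y. a x y + b x y) \<in> V"
    and "\<And>c a. a \<in> V \<Longrightarrow> (\<lambda>x y. c * a x y) \<in> V"
  shows "kspan S \<subseteq> V"
proof
  fix f assume "f \<in> kspan S"
  then obtain n and c :: "nat \<Rightarrow> 'k" and v :: "nat \<Rightarrow> ('a, 'k) incidence"
    where v: "\<forall>i<n. v i \<in> S" and f: "f = (\<lambda>x y. \<Sum>i<n. c i * v i x y)"
    unfolding kspan_def by blast
  have "(\<lambda>x y. \<Sum>i<m. c i * v i x y) \<in> V" if "m \<le> n" for m
    using that
  proof (induction m)
    case (Suc m)
    then show ?case
      using assms v by (simp add: subset_iff)
  qed (simp add: assms(2))
  then show "f \<in> V"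
    using f by blast
qed

lemma prodsp_mono: "U \<subseteq> U' \<Longrightarrow> V \<subseteq> V' \<Longrightarrow> prodsp U V \<subseteq> prodsp U' V'"
  unfolding prodsp_def by (rule kspan_mono) blast

lemma comsp_mono: "U \<subseteq> U' \<Longrightarrow> V \<subseteq> V' \<Longrightarrow> comsp U V \<subseteq> comsp U' V'"
  unfolding comsp_def by (rule kspan_mono) blast

lemma kspan_subset_Zk: "0 < k \<Longrightarrow> S \<subseteq> Zk k \<Longrightarrow> kspan S \<subseteq> Zk k"
  by (intro kspan_subset Zk_zero Zk_add Zk_scale)

lemma prodsp_Zk_subset:
  assumes "0 < m" "0 < n"
  shows "prodsp (Zk m) (Zk n) \<subseteq> Zk (m + n)"
  unfolding prodsp_def using assms by (intro kspan_subset_Zk) (auto intro: conv_mem_Zk)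

lemma prodsp_Zk_FI_subset: "0 < m \<Longrightarrow> prodsp (Zk m) FI \<subseteq> Zk m"
  unfolding prodsp_def by (intro kspan_subset_Zk) (auto intro: conv_mem_Zk_FI)

lemma comsp_Zk_subset:
  assumes "0 < m" "0 < n"
  shows "comsp (Zk m) (Zk n) \<subseteq> Zk (m + n)"
  unfolding comsp_def using assms by (intro kspan_subset_Zk) (auto intro: comm_mem_Zk)

lemma comsp_FI_subset_Zk_one: "comsp FI FI \<subseteq> Zk 1"
  unfolding comsp_def by (rule kspan_subset_Zk) (blast intro: comm_mem_Zk_one)+

section \<open>Inverting delta - beta for beta with zero diagonal\<close>

definition paths :: "('a::order, 'k::zero) incidence \<Rightarrow> 'a \<Rightarrow> 'a \<Rightarrow> 'a list set" where
  "paths b x y = {ps. ps \<noteq> [] \<and> hd ps = x \<and> last ps = y \<and>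
                      successively (\<lambda>u v. u < v \<and> b u v \<noteq> 0) ps}"

fun path_weight :: "('a, 'k::comm_monoid_mult) incidence \<Rightarrow> 'a list \<Rightarrow> 'k" where
  "path_weight b (u # v # ps) = b u v * path_weight b (v # ps)"
| "path_weight b _ = 1"

lemma path_weight_snoc: "ps \<noteq> [] \<Longrightarrow> path_weight b (ps @ [y]) = path_weight b ps * b (last ps) y"
  by (induction b ps rule: path_weight.induct) (auto simp: mult.assoc)

lemma paths_sorted: "ps \<in> paths b x y \<Longrightarrow> sorted_wrt (<) ps"
  unfolding paths_def
  by (metis (mono_tags, lifting) mem_Collect_eq successively_conv_sorted_wrt successively_mono transp_on_less)

lemma paths_bounds:
  assumes "ps \<in> paths b x y" "v \<in> set ps"
  shows "x \<le> v" "v \<le> y"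
proof -
  have sorted: "sorted_wrt (<) ps"
    using assms(1) by (rule paths_sorted)
  obtain qs where qs: "ps = x # qs"
    using assms(1) by (cases ps) (auto simp: paths_def)
  obtain rs where rs: "ps = rs @ [y]"
    using assms(1) by (cases ps rule: rev_cases) (auto simp: paths_def)
  show "x \<le> v"
    using sorted assms(2) unfolding qs by (auto simp: less_imp_le)
  show "v \<le> y"
    using sorted assms(2) unfolding rs by (auto simp: sorted_wrt_append less_imp_le)
qed

lemma paths_step_in_support:
  assumes "ps \<in> paths b x y" "Suc i < length ps"
  shows "(ps ! i, ps ! Suc i) \<in> offdiag_support b x y"
  using assms successively_nth[of _ ps i] paths_bounds[OF assms(1)]
  by (auto simp: paths_def offdiag_support_def)

lemma finite_paths:
  assumes "b \<in> FI"
  shows "finite (paths b x y)"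
proof -
  let ?A = "insert x (snd ` offdiag_support b x y)"
  have "set ps \<subseteq> ?A" if "ps \<in> paths b x y" for ps
  proof
    fix v assume "v \<in> set ps"
    then obtain i where i: "i < length ps" "v = ps ! i"
      by (auto simp: in_set_conv_nth)
    show "v \<in> ?A"
    proof (cases i)
      case 0
      then show ?thesis using i that by (cases ps) (auto simp: paths_def)
    next
      case (Suc j)
      then show ?thesis
        using paths_step_in_support[OF that, of j] i by force
    qed
  qed
  moreover have "distinct ps" if "sorted_wrt (<) ps" for ps :: "'a list"
    using that by (induction ps) auto
  ultimately have "paths b x y \<subseteq> {ps. set ps \<subseteq> ?A \<and> distinct ps}"
    using paths_sorted by blast
  moreover have "finite {ps. set ps \<subseteq> ?A \<and> distinct ps}"
    using assms by (simp add: finite_subset_distinct FI_finite_support)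
  ultimately show ?thesis
    by (rule finite_subset)
qed

lemma paths_le: "ps \<in> paths b x y \<Longrightarrow> x \<le> y"
  using paths_bounds[of ps b x y "hd ps"] by (auto simp: paths_def)

lemma paths_snoc_decomp:
  "paths b x y = (if x = y then {[x]} else {})
     \<union> (\<lambda>(z, qs). qs @ [y]) ` (SIGMA z:{z. x \<le> z \<and> z < y \<and> b z y \<noteq> 0}. paths b x z)"
  (is "_ = ?P1 \<union> ?P2")
proof (intro equalityI subsetI)
  fix ps assume ps: "ps \<in> paths b x y"
  show "ps \<in> ?P1 \<union> ?P2"
  proof (cases "length ps < 2")
    case True
    then have "ps = [x]" "x = y"
      using ps by (auto simp: paths_def length_Suc_conv numeral_2_eq_2 less_Suc_eq)
    then show ?thesis by simp
  next
    case False
    then obtain qs where qs: "ps = qs @ [y]" "qs \<noteq> []"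
      using ps by (cases ps rule: rev_cases) (auto simp: paths_def)
    then have "qs \<in> paths b x (last qs)" "last qs < y" "b (last qs) y \<noteq> 0"
      using ps by (auto simp: paths_def successively_append_iff)
    moreover have "x \<le> last qs"
      using calculation(1) by (rule paths_le)
    ultimately show ?thesis
      using qs(1) by (intro UnI2 rev_image_eqI[of "(last qs, qs)"]) auto
  qed
next
  fix ps assume "ps \<in> ?P1 \<union> ?P2"
  then show "ps \<in> paths b x y"
    by (auto simp: paths_def successively_append_iff split: if_splits)
qed

(* path_sum b is the locally finite sum of all powers b^n, n >= 0. *)
definition path_sum :: "('a::order, 'k::comm_ring_1) incidence \<Rightarrow> ('a, 'k) incidence" where
  "path_sum b x y = (\<Sum>ps\<in>paths b x y. path_weight b ps)"

lemma path_sum_triangular: "triangular (path_sum b)"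
  unfolding triangular_def path_sum_def by (metis paths_le sum.neutral)

lemma FI_path_sum:
  assumes "b \<in> FI"
  shows "path_sum b \<in> FI"
proof -
  have sub: "offdiag_support (path_sum b) x y
      \<subseteq> fst ` offdiag_support b x y \<times> snd ` offdiag_support b x y" (is "_ \<subseteq> ?T x y") for x y
  proof
    fix p assume "p \<in> offdiag_support (path_sum b) x y"
    then obtain u v where p: "p = (u, v)" "x \<le> u" "u < v" "v \<le> y" "path_sum b u v \<noteq> 0"
      by (auto simp: offdiag_support_def)
    then obtain ps where ps: "ps \<in> paths b u v"
      unfolding path_sum_def by (metis sum.neutral)
    let ?n = "length ps"
    have "ps \<noteq> []" "hd ps = u" "last ps = v"
      using ps by (auto simp: paths_def)
    then have "2 \<le> ?n"
      using p(3) by (cases ps) (auto simp: numeral_2_eq_2 Suc_le_eq)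
    then have "(ps ! 0, ps ! 1) \<in> offdiag_support b u v"
      and "(ps ! (?n - 2), ps ! (?n - 1)) \<in> offdiag_support b u v"
      using paths_step_in_support[OF ps, of 0] paths_step_in_support[OF ps, of "?n - 2"]
      by (simp_all add: numeral_2_eq_2 Suc_diff_Suc)
    moreover have "ps ! 0 = u" "ps ! (?n - 1) = v"
      using ps by (auto simp: paths_def hd_conv_nth last_conv_nth)
    moreover have "offdiag_support b u v \<subseteq> offdiag_support b x y"
      using p by (simp add: offdiag_support_mono)
    ultimately show "p \<in> ?T x y"
      using p(1) by force
  qed
  have "finite (?T x y)" for x y
    using assms by (simp add: FI_finite_support)
  then show ?thesis
    by (simp add: FI_iff path_sum_triangular finite_subset[OF sub])
qed

lemma path_sum_rec:
  assumes b: "b \<in> FI" and diag: "\<forall>x. b x x = 0"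
  shows "path_sum b x y = delta x y + conv (path_sum b) b x y"
proof -
  define F where "F = {z. x \<le> z \<and> z < y \<and> b z y \<noteq> 0}"
  define snoc where "snoc = (\<lambda>(z::'a, qs). qs @ [y])"
  have "F \<subseteq> fst ` offdiag_support b x y"
    unfolding F_def offdiag_support_def by force
  then have fin: "finite F"
    using b by (meson FI_finite_support finite_imageI finite_subset)
  have inj: "inj_on snoc (SIGMA z:F. paths b x z)"
    by (rule inj_onI) (auto simp: snoc_def paths_def)
  have disj: "(if x = y then {[x]} else {}) \<inter> snoc ` (SIGMA z:F. paths b x z) = {}"
    by (auto simp: snoc_def paths_def)
  have "conv (path_sum b) b x y = (\<Sum>z\<in>F. path_sum b x z * b z y)"
    using diag fin
    by (intro conv_eq_sum path_sum_triangular FI_triangular[OF b])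
      (auto simp: F_def less_le dest: triangularD[OF path_sum_triangular] triangularD[OF FI_triangular[OF b]])
  also have "\<dots> = (\<Sum>(z, qs)\<in>(SIGMA z:F. paths b x z). path_weight b qs * b z y)"
    unfolding path_sum_def sum_distrib_right using fin finite_paths[OF b] by (simp add: sum.Sigma)
  also have "\<dots> = (\<Sum>(z, qs)\<in>(SIGMA z:F. paths b x z). path_weight b (snoc (z, qs)))"
    by (intro sum.cong) (auto simp: snoc_def paths_def path_weight_snoc)
  also have "\<dots> = (\<Sum>ps\<in>snoc ` (SIGMA z:F. paths b x z). path_weight b ps)"
    using sum.reindex[OF inj, of "path_weight b"] by (simp add: case_prod_beta')
  finally have "path_sum b x y =
      (\<Sum>ps\<in>(if x = y then {[x]} else {}). path_weight b ps) + conv (path_sum b) b x y"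
    unfolding path_sum_def paths_snoc_decomp[of b x y] F_def[symmetric] snoc_def[symmetric]
    using disj fin finite_paths[OF b] by (simp add: sum.union_disjoint)
  then show ?thesis
    by (simp add: delta_def)
qed

lemma path_sum_left_inverse:
  assumes "b \<in> FI" "\<forall>x. b x x = 0"
  shows "conv (path_sum b) (\<lambda>x y. delta x y - b x y) = delta"
proof -
  have "conv (path_sum b) (\<lambda>x y. delta x y - b x y)
      = (\<lambda>x y. path_sum b x y - conv (path_sum b) b x y)"
    using assms
    by (simp add: conv_diff_right FI_path_sum FI_triangular FI_delta conv_delta_right path_sum_triangular)
  also have "\<dots> = delta"
    using path_sum_rec[OF assms] by (intro ext) simp
  finally show ?thesis .
qed

section \<open>The Jacobson radical\<close>

lemma left_idealD:
  assumes "left_ideal L"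
  shows "L \<subseteq> FI" "(\<lambda>x y. 0) \<in> L"
    and "a \<in> L \<Longrightarrow> b \<in> L \<Longrightarrow> (\<lambda>x y. a x y + b x y) \<in> L"
    and "a \<in> L \<Longrightarrow> (\<lambda>x y. - a x y) \<in> L"
    and "r \<in> FI \<Longrightarrow> a \<in> L \<Longrightarrow> conv r a \<in> L"
  using assms unfolding left_ideal_def by blast+

lemma left_ideal_eq_FI_if_delta:
  fixes L :: "('a::order, 'k::field) incidence set"
  assumes "left_ideal L" "delta \<in> L"
  shows "L = FI"
proof
  show "L \<subseteq> FI"
    using assms(1) by (rule left_idealD)
  show "FI \<subseteq> L"
  proof
    fix g :: "('a, 'k) incidence"
    assume g: "g \<in> FI"
    then have "conv g delta \<in> L"
      using left_idealD(5)[OF assms(1)] assms(2) by blast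
    then show "g \<in> L"
      using conv_delta_right[OF FI_triangular[OF g]] by simp
  qed
qed

lemma maximal_left_ideal_vanishing_at:
  fixes x :: "'a::order"
  shows "maximal_left_ideal {\<beta> :: ('a, 'k::field) incidence. \<beta> \<in> FI \<and> \<beta> x x = 0}"
proof -
  let ?L = "{\<beta> :: ('a, 'k) incidence. \<beta> \<in> FI \<and> \<beta> x x = 0}"
  have ideal: "left_ideal ?L"
    unfolding left_ideal_def
    by (auto simp: FI_zero FI_add FI_uminus FI_conv conv_diag FI_triangular)
  have proper: "?L \<noteq> FI"
    using FI_delta by (force simp: delta_def)
  have "L' = FI" if L': "left_ideal L'" "?L \<subseteq> L'" and "\<beta> \<in> L'" "\<beta> \<notin> ?L" for L' \<beta>
  proof -
    have \<beta>: "\<beta> \<in> FI" "\<beta> x x \<noteq> 0"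
      using that left_idealD(1)[OF L'(1)] by auto
    have "\<gamma> \<in> L'" if \<gamma>: "\<gamma> \<in> FI" for \<gamma>
    proof -
      define c where "c = \<gamma> x x / \<beta> x x"
      have "conv (\<lambda>u v. c * delta u v) \<beta> \<in> L'"
        using left_idealD(5)[OF L'(1) FI_scale[OF FI_delta] \<open>\<beta> \<in> L'\<close>] .
      then have "(\<lambda>u v. c * \<beta> u v) \<in> L'"
        by (simp add: conv_scaled_delta FI_triangular[OF \<beta>(1)])
      moreover have "(\<lambda>u v. \<gamma> u v - c * \<beta> u v) \<in> ?L"
        using FI_diff[OF \<gamma> FI_scale[OF \<beta>(1)], of c] \<beta>(2) by (simp add: c_def)
      then have "(\<lambda>u v. \<gamma> u v - c * \<beta> u v) \<in> L'"
        using L'(2) by blast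
      ultimately have "(\<lambda>u v. c * \<beta> u v + (\<gamma> u v - c * \<beta> u v)) \<in> L'"
        by (rule left_idealD(3)[OF L'(1)])
      then show ?thesis
        by simp
    qed
    then show ?thesis
      using left_idealD(1)[OF L'(1)] by blast
  qed
  then show ?thesis
    unfolding maximal_left_ideal_def using ideal proper by blast
qed

lemma Jac_subset_Zk_one: "(Jac :: ('a::order, 'k::field) incidence set) \<subseteq> Zk 1"
proof
  fix \<alpha> :: "('a, 'k) incidence"
  assume "\<alpha> \<in> Jac"
  then have "\<alpha> \<in> FI" "\<alpha> \<in> {\<beta>. \<beta> \<in> FI \<and> \<beta> x x = 0}" for x
    unfolding Jac_def using maximal_left_ideal_vanishing_at by blast+
  then show "\<alpha> \<in> Zk 1"
    unfolding Zk_one_iff by blast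
qed

lemma left_ideal_add_principal:
  fixes L :: "('a::order, 'k::field) incidence set"
  assumes L: "left_ideal L" and \<alpha>: "\<alpha> \<in> FI"
  shows "left_ideal {(\<lambda>x y. l x y + conv r \<alpha> x y) | l r. l \<in> L \<and> r \<in> FI}"
    (is "left_ideal ?L'")
proof -
  have L'I: "(\<lambda>x y. l x y + conv r \<alpha> x y) \<in> ?L'" if "l \<in> L" "r \<in> FI" for l r
    using that by blast
  note L_FI = left_idealD(1)[OF L]
  show ?thesis
    unfolding left_ideal_def
  proof (intro conjI ballI)
    show "?L' \<subseteq> FI"
    proof
      fix g assume "g \<in> ?L'"
      then obtain l r where "l \<in> L" "r \<in> FI" "g = (\<lambda>x y. l x y + conv r \<alpha> x y)"
        by blast
      then show "g \<in> FI"
        using L_FI FI_add[OF _ FI_conv[OF _ \<alpha>], of l r] by blast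
    qed
    show "(\<lambda>x y. 0) \<in> ?L'"
      using L'I[OF left_idealD(2)[OF L] FI_zero] by (simp add: conv_zero_left)
    fix a b assume "a \<in> ?L'" "b \<in> ?L'"
    then obtain l r l' r' where lr: "l \<in> L" "r \<in> FI" "l' \<in> L" "r' \<in> FI"
      and ab: "a = (\<lambda>x y. l x y + conv r \<alpha> x y)" "b = (\<lambda>x y. l' x y + conv r' \<alpha> x y)"
      by blast
    have "conv (\<lambda>x y. r x y + r' x y) \<alpha> = (\<lambda>x y. conv r \<alpha> x y + conv r' \<alpha> x y)"
      using lr \<alpha> by (simp add: conv_add_left FI_triangular)
    then show "(\<lambda>x y. a x y + b x y) \<in> ?L'"
      using L'I[OF left_idealD(3)[OF L lr(1,3)] FI_add[OF lr(2,4)]] unfolding ab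
      by (simp add: ac_simps)
  next
    fix a assume "a \<in> ?L'"
    then obtain l r where lr: "l \<in> L" "r \<in> FI" and a: "a = (\<lambda>x y. l x y + conv r \<alpha> x y)"
      by blast
    have "conv (\<lambda>x y. - r x y) \<alpha> = (\<lambda>x y. - conv r \<alpha> x y)"
      using lr \<alpha> by (simp add: conv_uminus_left FI_triangular)
    then show "(\<lambda>x y. - a x y) \<in> ?L'"
      using L'I[OF left_idealD(4)[OF L lr(1)] FI_uminus[OF lr(2)]] unfolding a
      by simp
  next
    fix s a :: "('a, 'k) incidence"
    assume s: "s \<in> FI" and "a \<in> ?L'"
    then obtain l r where lr: "l \<in> L" "r \<in> FI" and a: "a = (\<lambda>x y. l x y + conv r \<alpha> x y)"
      by blast
    have "l \<in> FI"
      using lr(1) L_FI by blast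
    then have "conv s a = (\<lambda>x y. conv s l x y + conv s (conv r \<alpha>) x y)"
      unfolding a using s by (simp add: conv_add_right conv_triangular FI_triangular)
    also have "conv s (conv r \<alpha>) = conv (conv s r) \<alpha>"
      using s lr(2) \<alpha> by (simp add: conv_assoc)
    finally show "conv s a \<in> ?L'"
      using L'I[OF left_idealD(5)[OF L s lr(1)] FI_conv[OF s lr(2)]] by simp
  qed
qed

lemma Zk_one_subset_Jac: "(Zk 1 :: ('a::order, 'k::field) incidence set) \<subseteq> Jac"
proof
  fix \<alpha> :: "('a, 'k) incidence"
  assume "\<alpha> \<in> Zk 1"
  then have \<alpha>: "\<alpha> \<in> FI" "\<forall>x. \<alpha> x x = 0"
    unfolding Zk_one_iff by blast+
  have "\<alpha> \<in> L" if max: "maximal_left_ideal L" for L :: "('a, 'k) incidence set"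
  proof (rule ccontr)
    assume "\<alpha> \<notin> L"
    have L: "left_ideal L" "L \<noteq> FI"
      using max by (simp_all add: maximal_left_ideal_def)
    let ?L' = "{(\<lambda>x y. l x y + conv r \<alpha> x y) | l r. l \<in> L \<and> r \<in> FI}"
    have "left_ideal ?L'"
      using L(1) \<alpha>(1) by (rule left_ideal_add_principal)
    moreover have "L \<subseteq> ?L'"
      using FI_zero by (force simp: conv_zero_left)
    moreover have "\<alpha> \<in> ?L'"
      using left_idealD(2)[OF L(1)] FI_delta conv_delta_left[OF FI_triangular[OF \<alpha>(1)]] by force
    ultimately have "?L' = FI"
      using max \<open>\<alpha> \<notin> L\<close> unfolding maximal_left_ideal_def by blast
    then obtain l r where lr: "l \<in> L" "r \<in> FI" and delta: "delta = (\<lambda>x y. l x y + conv r \<alpha> x y)"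
      using FI_delta by blast
    define \<beta> where "\<beta> = conv r \<alpha>"
    have \<beta>: "\<beta> \<in> FI" "\<forall>x. \<beta> x x = 0"
      using lr(2) \<alpha> by (simp_all add: \<beta>_def FI_conv conv_diag FI_triangular)
    have "l = (\<lambda>x y. delta x y - \<beta> x y)"
      unfolding \<beta>_def delta by simp
    then have "conv (path_sum \<beta>) l = delta"
      using path_sum_left_inverse[OF \<beta>] by simp
    then have "delta \<in> L"
      using left_idealD(5)[OF L(1) FI_path_sum[OF \<beta>(1)] lr(1)] by simp
    then show False
      using left_ideal_eq_FI_if_delta L by blast
  qed
  then show "\<alpha> \<in> Jac"
    unfolding Jac_def using \<alpha>(1) by blast
qed

lemma Zk_one_eq_Jac: "Zk 1 = Jac"
  using Zk_one_subset_Jac Jac_subset_Zk_one by blast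

section \<open>Derived series and lower central series\<close>

lemma FIder_Suc_subset: "(FIder (Suc n) :: ('a::order, 'k::field) incidence set) \<subseteq> Zk (2 ^ n)"
proof (induction n)
  case 0
  have "(FIder (Suc 0) :: ('a, 'k) incidence set) = prodsp (comsp FI FI) FI"
    by simp
  also have "\<dots> \<subseteq> prodsp (Zk 1) FI"
    by (intro prodsp_mono comsp_FI_subset_Zk_one order_refl)
  also have "\<dots> \<subseteq> Zk 1"
    by (rule prodsp_Zk_FI_subset) simp
  finally show ?case
    by simp
next
  case (Suc n)
  have "(FIder (Suc (Suc n)) :: ('a, 'k) incidence set) \<subseteq> prodsp (comsp (Zk (2 ^ n)) (Zk (2 ^ n))) FI"
    unfolding FIder.simps(2)[of "Suc n"] by (rule prodsp_mono[OF comsp_mono[OF Suc.IH Suc.IH] order_refl])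
  also have "\<dots> \<subseteq> prodsp (Zk (2 ^ Suc n)) FI"
    using prodsp_mono[OF comsp_Zk_subset[of "2 ^ n" "2 ^ n"] order_refl] by (simp add: mult_2)
  also have "\<dots> \<subseteq> Zk (2 ^ Suc n)"
    by (simp add: prodsp_Zk_FI_subset)
  finally show ?case .
qed

lemma lcs_subset: "(lcs n :: ('a::order, 'k::field) incidence set) \<subseteq> Zk (Suc n)"
proof (induction n)
  case 0
  then show ?case
    using Jac_subset_Zk_one by simp
next
  case (Suc n)
  have "(lcs (Suc n) :: ('a, 'k) incidence set) \<subseteq> comsp (Zk (Suc n)) (Zk 1)"
    unfolding lcs.simps by (rule comsp_mono[OF Suc.IH Jac_subset_Zk_one])
  also have "\<dots> \<subseteq> Zk (Suc (Suc n))"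
    using comsp_Zk_subset[of "Suc n" 1] by simp
  finally show ?case .
qed

lemma Jder_subset: "(Jder n :: ('a::order, 'k::field) incidence set) \<subseteq> Zk (2 ^ n)"
proof (induction n)
  case 0
  then show ?case
    using Jac_subset_Zk_one by simp
next
  case (Suc n)
  have "(Jac :: ('a, 'k) incidence set) \<subseteq> FI"
    by (simp add: Jac_def)
  then have "(Jder (Suc n) :: ('a, 'k) incidence set) \<subseteq> prodsp (comsp (Zk (2 ^ n)) (Zk (2 ^ n))) FI"
    unfolding Jder.simps by (rule prodsp_mono[OF comsp_mono[OF Suc.IH Suc.IH]])
  also have "\<dots> \<subseteq> prodsp (Zk (2 ^ Suc n)) FI"
    using prodsp_mono[OF comsp_Zk_subset[of "2 ^ n" "2 ^ n"] order_refl] by (simp add: mult_2)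
  also have "\<dots> \<subseteq> Zk (2 ^ Suc n)"
    by (simp add: prodsp_Zk_FI_subset)
  finally show ?case .
qed

theorem lemma1p2:
  shows "FIder 1 \<subseteq> (Zk 1 :: ('a::order \<Rightarrow> 'a \<Rightarrow> 'k::field) set)
    \<and> (Zk 1 :: ('a \<Rightarrow> 'a \<Rightarrow> 'k) set) = Jac
    \<and> (\<forall>m n. 0 < m \<longrightarrow> 0 < n \<longrightarrow>
          prodsp (Zk m) (Zk n) \<subseteq> (Zk (m + n) :: ('a \<Rightarrow> 'a \<Rightarrow> 'k) set))
    \<and> (\<forall>n. 0 < n \<longrightarrow> lcs (n - 1) \<subseteq> (Zk n :: ('a \<Rightarrow> 'a \<Rightarrow> 'k) set))
    \<and> (\<forall>n. 0 < n \<longrightarrow> FIder n \<subseteq> (Zk (2 ^ (n - 1)) :: ('a \<Rightarrow> 'a \<Rightarrow> 'k) set))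
    \<and> (\<forall>n. Jder n \<subseteq> (Zk (2 ^ n) :: ('a \<Rightarrow> 'a \<Rightarrow> 'k) set))"
proof (intro conjI allI impI)
  show "FIder 1 \<subseteq> (Zk 1 :: ('a \<Rightarrow> 'a \<Rightarrow> 'k) set)"
    using FIder_Suc_subset[of 0] by simp
  show "(Zk 1 :: ('a \<Rightarrow> 'a \<Rightarrow> 'k) set) = Jac"
    by (rule Zk_one_eq_Jac)
  show "prodsp (Zk m) (Zk n) \<subseteq> (Zk (m + n) :: ('a \<Rightarrow> 'a \<Rightarrow> 'k) set)" if "0 < m" "0 < n" for m n
    using that by (rule prodsp_Zk_subset)
  show "lcs (n - 1) \<subseteq> (Zk n :: ('a \<Rightarrow> 'a \<Rightarrow> 'k) set)" if "0 < n" for n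
    using that lcs_subset[of "n - 1"] by simp
  show "FIder n \<subseteq> (Zk (2 ^ (n - 1)) :: ('a \<Rightarrow> 'a \<Rightarrow> 'k) set)" if "0 < n" for n
    using that FIder_Suc_subset[of "n - 1"] by simp
  show "Jder n \<subseteq> (Zk (2 ^ n) :: ('a \<Rightarrow> 'a \<Rightarrow> 'k) set)" for n
    by (rule Jder_subset)
qed

end
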